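(* Let $\mathbb{F}$ be a field, $n\in\mathbb{N}$, $W$ a linear subspace of $\mathbb{F}^n$ and $v\in\mathbb{F}^n$. Then $(M(W)/^\bullet v)^*=M(W)^*\setminus^{\bullet} v$, that is, the dual of the matroid $M(W\cap\mathrm{span}(v)^\perp)$ equals $M(\mathrm{span}(W^\perp\cup\{v\}))$.
   Context: For $x,y\in\mathbb{F}^n$, $x\cdot y=\sum_i x_iy_i$, and for a subspace $U$, $U^\perp=\{x: x\cdot u=0\ \forall u\in U\}$. For a subspace $W\subseteq\mathbb{F}^n$, $M(W)$ is the matroid on ground set $\{1,\dots,n\}$ defined as the column matroid of a matrix whose rows form a basis of $W$ (a set of indices is independent iff the corresponding columns are linearly independent; this does not depend on the basis chosen). Contraction$^\bullet$: $M(W)/^\bullet v:=M(W\cap\mathrm{span}(v)^\perp)$. Deletion$^\bullet$: $M(W)\setminus^\bullet v:=M(\mathrm{span}(W\cup\{v\}))$, and $M(W)^*\setminus^\bullet v$ means $M(W^\perp)\setminus^\bullet v$. $M^*$ denotes the dual matroid (independent sets: sets disjoint from some basis of $M$). *)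

theory Defs
  imports Main
begin

text \<open>Vectors of F^n are represented as functions nat => F vanishing outside {0..<n};
  coordinate i (0-based) corresponds to coordinate i+1 of the paper.
  The ground set {1..n} of the paper is represented as {0..<n}.\<close>

definition vecs :: "nat \<Rightarrow> (nat \<Rightarrow> 'a::field) set" where
  "vecs n = {x. \<forall>i\<ge>n. x i = 0}"

definition dotp :: "nat \<Rightarrow> (nat \<Rightarrow> 'a::field) \<Rightarrow> (nat \<Rightarrow> 'a) \<Rightarrow> 'a" where
  "dotp n x y = (\<Sum>i<n. x i * y i)"

definition is_subspace :: "nat \<Rightarrow> (nat \<Rightarrow> 'a::field) set \<Rightarrow> bool" where
  "is_subspace n W \<longleftrightarrow> W \<subseteq> vecs n \<and> (\<lambda>_. 0) \<in> W \<and>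
     (\<forall>x\<in>W. \<forall>y\<in>W. (\<lambda>i. x i + y i) \<in> W) \<and>
     (\<forall>c. \<forall>x\<in>W. (\<lambda>i. c * x i) \<in> W)"

definition spanv :: "nat \<Rightarrow> (nat \<Rightarrow> 'a::field) set \<Rightarrow> (nat \<Rightarrow> 'a) set" where
  "spanv n S = \<Inter>{U. is_subspace n U \<and> S \<subseteq> U}"

definition perp :: "nat \<Rightarrow> (nat \<Rightarrow> 'a::field) set \<Rightarrow> (nat \<Rightarrow> 'a) set" where
  "perp n U = {x \<in> vecs n. \<forall>u\<in>U. dotp n x u = 0}"

definition lin_indep_list :: "(nat \<Rightarrow> 'a::field) list \<Rightarrow> bool" where
  "lin_indep_list bs \<longleftrightarrow>
     (\<forall>c. (\<lambda>i. \<Sum>j<length bs. c j * (bs ! j) i) = (\<lambda>_. 0) \<longrightarrow> (\<forall>j<length bs. c j = 0))"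

definition is_basis_list :: "nat \<Rightarrow> (nat \<Rightarrow> 'a::field) set \<Rightarrow> (nat \<Rightarrow> 'a) list \<Rightarrow> bool" where
  "is_basis_list n W bs \<longleftrightarrow> set bs \<subseteq> vecs n \<and> lin_indep_list bs \<and> spanv n (set bs) = W"

text \<open>Column matroid of the matrix whose rows are bs (an k x n matrix, k = length bs):
  I is independent iff I is a set of column indices and the columns indexed by I
  are linearly independent in F^k.\<close>
definition col_indep :: "nat \<Rightarrow> (nat \<Rightarrow> 'a::field) list \<Rightarrow> nat set \<Rightarrow> bool" where
  "col_indep n bs I \<longleftrightarrow> I \<subseteq> {0..<n} \<and>
     (\<forall>c. (\<forall>j<length bs. (\<Sum>i\<in>I. c i * (bs ! j) i) = 0) \<longrightarrow> (\<forall>i\<in>I. c i = 0))"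

text \<open>M(W): the column matroid of a matrix whose rows form a basis of W
  (a basis chosen by Hilbert choice), given by its independence predicate.\<close>
definition matroid_of :: "nat \<Rightarrow> (nat \<Rightarrow> 'a::field) set \<Rightarrow> nat set \<Rightarrow> bool" where
  "matroid_of n W = col_indep n (SOME bs. is_basis_list n W bs)"

definition matroid_basis :: "nat set \<Rightarrow> (nat set \<Rightarrow> bool) \<Rightarrow> nat set \<Rightarrow> bool" where
  "matroid_basis E ind B \<longleftrightarrow> B \<subseteq> E \<and> ind B \<and>
     (\<forall>X. X \<subseteq> E \<and> ind X \<and> B \<subseteq> X \<longrightarrow> X = B)"

definition dual_matroid :: "nat set \<Rightarrow> (nat set \<Rightarrow> bool) \<Rightarrow> nat set \<Rightarrow> bool" where
  "dual_matroid E ind I \<longleftrightarrow> I \<subseteq> E \<and> (\<exists>B. matroid_basis E ind B \<and> I \<inter> B = {})"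

definition contract_bullet :: "nat \<Rightarrow> (nat \<Rightarrow> 'a::field) set \<Rightarrow> (nat \<Rightarrow> 'a) \<Rightarrow> nat set \<Rightarrow> bool" where
  "contract_bullet n W v = matroid_of n (W \<inter> perp n (spanv n {v}))"

definition delete_bullet :: "nat \<Rightarrow> (nat \<Rightarrow> 'a::field) set \<Rightarrow> (nat \<Rightarrow> 'a) \<Rightarrow> nat set \<Rightarrow> bool" where
  "delete_bullet n W v = matroid_of n (spanv n (W \<union> {v}))"

end

theory Submission
  imports Defs
begin

(* Say that J is independent for a subspace C when no nonzero vector of C is supported in J.
   A linear dependency among the columns of a matrix is a vector orthogonal to its rows, so
   M(U) is this matroid for C = U\<^sup>\<bottom>.  For every subspace C its dual is the same matroid for
   C\<^sup>\<bottom>: a set disjoint from a basis B supports no vector of C\<^sup>\<bottom>, by pairing such a vector with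
   the fundamental circuits of B; conversely, a basis avoiding a C\<^sup>\<bottom>-independent set I is found
   by taking B maximal outside I, because vectors of C\<^sup>\<bottom> can be prescribed arbitrarily on any
   C-independent set.  The theorem then follows from U\<^sup>\<bottom>\<^sup>\<bottom> = U, as
   span(W\<^sup>\<bottom> \<union> {v})\<^sup>\<bottom> = W \<inter> span(v)\<^sup>\<bottom>. *)

definition supp_indep :: "nat \<Rightarrow> (nat \<Rightarrow> 'a::field) set \<Rightarrow> nat set \<Rightarrow> bool" where
  "supp_indep n C J \<longleftrightarrow> J \<subseteq> {0..<n} \<and> (\<forall>x\<in>C. (\<forall>i. i \<notin> J \<longrightarrow> x i = 0) \<longrightarrow> x = (\<lambda>_. 0))"

definition unit_vec :: "nat \<Rightarrow> nat \<Rightarrow> 'a::field" where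
  "unit_vec k = (\<lambda>i. if i = k then 1 else 0)"

lemma unit_vec_in_vecs: "k < n \<Longrightarrow> unit_vec k \<in> vecs n"
  unfolding unit_vec_def vecs_def by auto

lemma dotp_commute: "dotp n x y = dotp n y x"
  unfolding dotp_def by (simp add: mult.commute)

lemma dotp_add_left: "dotp n (\<lambda>i. x i + y i) u = dotp n x u + dotp n y u"
  unfolding dotp_def by (simp add: distrib_right sum.distrib)

lemma dotp_scale_left: "dotp n (\<lambda>i. c * x i) u = c * dotp n x u"
  unfolding dotp_def by (simp add: sum_distrib_left mult.assoc)

lemma dotp_add_right: "dotp n u (\<lambda>i. x i + y i) = dotp n u x + dotp n u y"
  unfolding dotp_def by (simp add: distrib_left sum.distrib)

lemma dotp_scale_right: "dotp n u (\<lambda>i. c * x i) = c * dotp n u x"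
  unfolding dotp_def by (simp add: sum_distrib_left mult.left_commute)

lemma dotp_diff_scale_right: "dotp n u (\<lambda>i. x i - c * y i) = dotp n u x - c * dotp n u y"
  unfolding dotp_def
  by (simp add: sum_distrib_left mult.left_commute right_diff_distrib sum_subtractf)

lemma dotp_zero_left [simp]: "dotp n (\<lambda>_. 0) u = 0"
  unfolding dotp_def by simp

lemma dotp_zero_right [simp]: "dotp n u (\<lambda>_. 0) = 0"
  unfolding dotp_def by simp

lemma dotp_Suc: "dotp (Suc n) x y = dotp n x y + x n * y n"
  unfolding dotp_def by simp

lemma dotp_eq_single_term:
  assumes "j < n" and "\<And>l. l < n \<Longrightarrow> l \<noteq> j \<Longrightarrow> y l * x l = 0"
  shows "dotp n y x = y j * x j"
proof -
  have "dotp n y x = y j * x j + (\<Sum>l\<in>{..<n} - {j}. y l * x l)"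
    unfolding dotp_def using assms(1) by (simp add: sum.remove)
  also have "(\<Sum>l\<in>{..<n} - {j}. y l * x l) = 0"
    using assms(2) by (intro sum.neutral) auto
  finally show ?thesis by simp
qed

lemma dotp_unit_vec: "k < n \<Longrightarrow> dotp n (unit_vec k) x = x k"
  by (subst dotp_eq_single_term[of k]) (auto simp: unit_vec_def)

lemma vecs_0: "vecs 0 = {(\<lambda>_. 0)}"
  unfolding vecs_def by auto

lemma vecs_mono_Suc: "vecs n \<subseteq> vecs (Suc n)"
  unfolding vecs_def by auto

lemma in_vecs_iff_Suc: "x \<in> vecs n \<longleftrightarrow> x \<in> vecs (Suc n) \<and> x n = 0"
  unfolding vecs_def by (auto simp: Suc_le_eq) (metis le_neq_implies_less)

lemma dotp_Suc_vecs: "y \<in> vecs n \<Longrightarrow> dotp (Suc n) y x = dotp n y x"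
  by (simp add: dotp_Suc vecs_def)

section \<open>Subspaces, spans and orthogonal complements\<close>

lemma subspace_in_vecs: "is_subspace n U \<Longrightarrow> U \<subseteq> vecs n"
  unfolding is_subspace_def by simp

lemma subspace_zero: "is_subspace n U \<Longrightarrow> (\<lambda>_. 0) \<in> U"
  unfolding is_subspace_def by simp

lemma subspace_add: "is_subspace n U \<Longrightarrow> x \<in> U \<Longrightarrow> y \<in> U \<Longrightarrow> (\<lambda>i. x i + y i) \<in> U"
  unfolding is_subspace_def by simp

lemma subspace_scale: "is_subspace n U \<Longrightarrow> x \<in> U \<Longrightarrow> (\<lambda>i. c * x i) \<in> U"
  unfolding is_subspace_def by simp

lemma subspace_diff_scale:
  assumes "is_subspace n U" "x \<in> U" "y \<in> U"
  shows "(\<lambda>i. x i - c * y i) \<in> U"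
  using subspace_add[OF assms(1,2) subspace_scale[OF assms(1,3), of "- c"]] by simp

lemma subspace_vecs: "is_subspace n (vecs n)"
  unfolding is_subspace_def vecs_def by auto

lemma subspace_Suc: "is_subspace n U \<Longrightarrow> is_subspace (Suc n) U"
  unfolding is_subspace_def using vecs_mono_Suc by blast

lemma subspace_Int_vecs: "is_subspace m U \<Longrightarrow> is_subspace n (U \<inter> vecs n)"
  unfolding is_subspace_def vecs_def by auto

lemma subspace_perp: "is_subspace n (perp n S)"
  unfolding is_subspace_def perp_def vecs_def by (auto simp: dotp_add_left dotp_scale_left)

lemma spanv_least: "is_subspace n V \<Longrightarrow> S \<subseteq> V \<Longrightarrow> spanv n S \<subseteq> V"
  unfolding spanv_def by auto

lemma spanv_superset: "S \<subseteq> spanv n S"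
  unfolding spanv_def by auto

lemma spanv_mono: "S \<subseteq> T \<Longrightarrow> spanv n S \<subseteq> spanv n T"
  unfolding spanv_def by auto

lemma subspace_spanv:
  assumes "S \<subseteq> vecs n"
  shows "is_subspace n (spanv n S)"
proof -
  have "vecs n \<in> {U. is_subspace n U \<and> S \<subseteq> U}"
    using assms subspace_vecs by auto
  then show ?thesis
    unfolding spanv_def is_subspace_def by blast
qed

lemma spanv_Suc:
  assumes "S \<subseteq> vecs n"
  shows "spanv (Suc n) S = spanv n S"
proof
  show "spanv (Suc n) S \<subseteq> spanv n S"
    using assms by (intro spanv_least subspace_Suc subspace_spanv spanv_superset)
  have "is_subspace n (spanv (Suc n) S \<inter> vecs n)"
    using assms vecs_mono_Suc by (intro subspace_Int_vecs[of "Suc n"] subspace_spanv) blast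
  moreover have "S \<subseteq> spanv (Suc n) S \<inter> vecs n"
    using assms spanv_superset by blast
  ultimately show "spanv n S \<subseteq> spanv (Suc n) S"
    using spanv_least by blast
qed

lemma perp_antimono: "S \<subseteq> T \<Longrightarrow> perp n T \<subseteq> perp n S"
  unfolding perp_def by auto

lemma perp_zero: "perp n {(\<lambda>_. 0)} = vecs n"
  unfolding perp_def by auto

lemma perp_Un: "perp n (S \<union> T) = perp n S \<inter> perp n T"
  unfolding perp_def by auto

lemma subspace_dotp_kernel: "is_subspace n {u \<in> vecs n. dotp n x u = 0}"
  unfolding is_subspace_def vecs_def by (auto simp: dotp_add_right dotp_scale_right)

lemma perp_spanv:
  assumes "S \<subseteq> vecs n"
  shows "perp n (spanv n S) = perp n S"
proof
  show "perp n (spanv n S) \<subseteq> perp n S"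
    by (rule perp_antimono[OF spanv_superset])
  show "perp n S \<subseteq> perp n (spanv n S)"
  proof
    fix x assume x: "x \<in> perp n S"
    let ?V = "{u \<in> vecs n. dotp n x u = 0}"
    have "is_subspace n ?V" by (rule subspace_dotp_kernel)
    moreover have "S \<subseteq> ?V" using x assms unfolding perp_def by auto
    ultimately have "spanv n S \<subseteq> ?V" by (rule spanv_least)
    then show "x \<in> perp n (spanv n S)" using x unfolding perp_def by auto
  qed
qed

text \<open>The inductions on \<open>n\<close> below eliminate the last coordinate with a pivot vector,
  as in Gaussian elimination.\<close>

lemma subspace_Suc_cases:
  assumes "is_subspace (Suc n) U"
  obtains "U \<subseteq> vecs n" | w where "w \<in> U" "w n = 1"
proof (cases "\<forall>u\<in>U. u n = 0")
  case True
  then have "U \<subseteq> vecs n"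
    using subspace_in_vecs[OF assms] in_vecs_iff_Suc by blast
  then show ?thesis by (rule that(1))
next
  case False
  then obtain u where "u \<in> U" "u n \<noteq> 0" by blast
  then show ?thesis
    using that(2)[of "\<lambda>i. inverse (u n) * u i"] subspace_scale[OF assms] by simp
qed

lemma pivot_eliminate:
  assumes "is_subspace (Suc n) U" "w \<in> U" "w n = 1" "u \<in> U"
  shows "(\<lambda>i. u i - u n * w i) \<in> U \<inter> vecs n"
proof -
  have "(\<lambda>i. u i - u n * w i) \<in> U" by (rule subspace_diff_scale[OF assms(1,4,2)])
  then show ?thesis
    using subspace_in_vecs[OF assms(1)] in_vecs_iff_Suc[of "\<lambda>i. u i - u n * w i" n] assms(3)
    by auto
qed

lemma subspace_separation:
  "is_subspace n U \<Longrightarrow> z \<in> vecs n \<Longrightarrow> z \<notin> U \<Longrightarrow> \<exists>y\<in>perp n U. dotp n y z \<noteq> 0"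
proof (induction n arbitrary: U z)
  case 0
  then show ?case using subspace_zero[OF "0.prems"(1)] by (simp add: vecs_0)
next
  case (Suc n)
  note U = Suc.prems(1)
  from U show ?case
  proof (cases rule: subspace_Suc_cases)
    case 1
    show ?thesis
    proof (cases "z n = 0")
      case False
      have "unit_vec n \<in> perp (Suc n) U"
        using 1 unit_vec_in_vecs[of n "Suc n"]
        by (auto simp: perp_def dotp_unit_vec vecs_def)
      moreover have "dotp (Suc n) (unit_vec n) z = z n" by (simp add: dotp_unit_vec)
      ultimately show ?thesis using False by metis
    next
      case True
      have "z \<in> vecs n" using True Suc.prems(2) in_vecs_iff_Suc by blast
      moreover have "is_subspace n U" using subspace_Int_vecs[OF U, of n] 1 by (simp add: Int_absorb2)
      ultimately obtain y where "y \<in> perp n U" "dotp n y z \<noteq> 0"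
        using Suc.IH Suc.prems(3) by blast
      then show ?thesis
        using vecs_mono_Suc by (intro bexI[of _ y]) (auto simp: perp_def dotp_Suc_vecs)
    qed
  next
    case (2 w)
    define z' where "z' = (\<lambda>i. z i - z n * w i)"
    have "w \<in> vecs (Suc n)" using 2 subspace_in_vecs[OF U] by blast
    then have "z' \<in> vecs (Suc n)" using Suc.prems(2) unfolding z'_def vecs_def by auto
    then have "z' \<in> vecs n" using in_vecs_iff_Suc[of z' n] 2 by (simp add: z'_def)
    moreover have "z' \<notin> U \<inter> vecs n"
    proof
      assume "z' \<in> U \<inter> vecs n"
      then have "(\<lambda>i. z' i - (- z n) * w i) \<in> U" using subspace_diff_scale[OF U] 2 by blast
      then show False using Suc.prems(3) by (simp add: z'_def)
    qed
    ultimately obtain y' where y': "y' \<in> perp n (U \<inter> vecs n)" "dotp n y' z' \<noteq> 0"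
      using Suc.IH[OF subspace_Int_vecs[OF U]] by blast
    define y where "y = y'(n := - dotp n y' w)"
    have dotp_y: "dotp (Suc n) y x = dotp n y' (\<lambda>i. x i - x n * w i)" for x
    proof -
      have "dotp n y x = dotp n y' x" unfolding dotp_def y_def by (intro sum.cong) auto
      then show ?thesis unfolding dotp_diff_scale_right dotp_Suc by (simp add: y_def mult.commute)
    qed
    have "y \<in> vecs (Suc n)" using y'(1) unfolding perp_def vecs_def y_def by auto
    moreover have "dotp (Suc n) y u = 0" if "u \<in> U" for u
      using y'(1) pivot_eliminate[OF U 2 that] unfolding dotp_y perp_def by blast
    ultimately have "y \<in> perp (Suc n) U" unfolding perp_def by blast
    moreover have "dotp (Suc n) y z \<noteq> 0" using y'(2) unfolding dotp_y z'_def .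
    ultimately show ?thesis by blast
  qed
qed

lemma perp_perp:
  assumes "is_subspace n U"
  shows "perp n (perp n U) = U"
proof
  show "U \<subseteq> perp n (perp n U)"
    using subspace_in_vecs[OF assms] unfolding perp_def by (auto simp: dotp_commute)
  show "perp n (perp n U) \<subseteq> U"
    using subspace_separation[OF assms] unfolding perp_def by (fastforce simp: dotp_commute)
qed

lemma subspace_eq_vecs_if_perp_trivial:
  assumes "is_subspace n V" "perp n V \<subseteq> {(\<lambda>_. 0)}"
  shows "V = vecs n"
  using perp_antimono[OF assms(2), of n] perp_perp[OF assms(1)] subspace_in_vecs[OF assms(1)]
  by (simp add: perp_zero)

section \<open>Bases and column matroids\<close>

lemma lin_indep_Cons_pivot:
  assumes bs: "lin_indep_list bs" and last_zero: "\<forall>b\<in>set bs. b n = 0" and w: "w n \<noteq> 0"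
  shows "lin_indep_list (w # bs)"
  unfolding lin_indep_list_def
proof (intro allI impI)
  fix c :: "nat \<Rightarrow> 'a" and j
  assume comb_Cons: "(\<lambda>i. \<Sum>j<length (w # bs). c j * ((w # bs) ! j) i) = (\<lambda>_. 0)"
    and j: "j < length (w # bs)"
  have comb: "c 0 * w i + (\<Sum>j<length bs. c (Suc j) * (bs ! j) i) = 0" for i
    using fun_cong[OF comb_Cons, of i]
    by (simp only: length_Cons sum.lessThan_Suc_shift nth_Cons_0 nth_Cons_Suc)
  have "(bs ! j) n = 0" if "j < length bs" for j using last_zero nth_mem[OF that] by blast
  then have c0: "c 0 = 0" using comb[of n] w by simp
  then have "(\<lambda>i. \<Sum>j<length bs. c (Suc j) * (bs ! j) i) = (\<lambda>_. 0)"
    using comb by simp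
  then have "\<forall>j<length bs. c (Suc j) = 0"
    using spec[OF bs[unfolded lin_indep_list_def], of "\<lambda>j. c (Suc j)"] by blast
  then show "c j = 0" using c0 j by (cases j) auto
qed

lemma spanv_insert_pivot:
  assumes U: "is_subspace (Suc n) U" and w: "w \<in> U" "w n = 1"
    and S: "spanv (Suc n) S = U \<inter> vecs n"
  shows "spanv (Suc n) (insert w S) = U"
proof
  have "S \<subseteq> U" using S spanv_superset[of S "Suc n"] by blast
  then show "spanv (Suc n) (insert w S) \<subseteq> U"
    using w(1) by (intro spanv_least[OF U]) auto
  let ?S = "spanv (Suc n) (insert w S)"
  have subspace_S: "is_subspace (Suc n) ?S"
    using \<open>S \<subseteq> U\<close> w(1) subspace_in_vecs[OF U] by (intro subspace_spanv) auto
  show "U \<subseteq> ?S"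
  proof
    fix u assume u: "u \<in> U"
    have "(\<lambda>i. u i - u n * w i) \<in> ?S"
      using pivot_eliminate[OF U w u] S spanv_mono[of S "insert w S"] by auto
    moreover have "w \<in> ?S" using spanv_superset[of "insert w S"] by auto
    ultimately have "(\<lambda>i. (u i - u n * w i) - (- u n) * w i) \<in> ?S"
      by (rule subspace_diff_scale[OF subspace_S])
    then show "u \<in> ?S" by simp
  qed
qed

lemma basis_list_exists: "is_subspace n U \<Longrightarrow> \<exists>bs. is_basis_list n U bs"
proof (induction n arbitrary: U)
  case 0
  then have "U = {(\<lambda>_. 0)}" using subspace_zero subspace_in_vecs vecs_0 by blast
  moreover have "(\<lambda>_. 0) \<in> spanv 0 {}" by (rule subspace_zero[OF subspace_spanv]) simp
  ultimately have "spanv 0 (set []) = U" using spanv_least[OF "0.prems"] by auto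
  then show ?case unfolding is_basis_list_def lin_indep_list_def by (intro exI[of _ "[]"]) simp
next
  case (Suc n)
  note U = Suc.prems
  from U show ?case
  proof (cases rule: subspace_Suc_cases)
    case 1
    then obtain bs where "is_basis_list n U bs"
      using Suc.IH subspace_Int_vecs[OF U, of n] by (metis Int_absorb2)
    then show ?thesis
      unfolding is_basis_list_def using spanv_Suc vecs_mono_Suc by blast
  next
    case (2 w)
    obtain bs where bs: "set bs \<subseteq> vecs n" "lin_indep_list bs" "spanv n (set bs) = U \<inter> vecs n"
      using Suc.IH[OF subspace_Int_vecs[OF U]] unfolding is_basis_list_def by blast
    have span_bs: "spanv (Suc n) (set bs) = U \<inter> vecs n"
      using bs(1,3) spanv_Suc by blast
    have "\<forall>b\<in>set bs. b n = 0" using bs(1) unfolding vecs_def by blast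
    moreover have "w n \<noteq> 0" using \<open>w n = 1\<close> by simp
    ultimately have "lin_indep_list (w # bs)" by (rule lin_indep_Cons_pivot[OF bs(2)])
    moreover have "spanv (Suc n) (set (w # bs)) = U"
      using spanv_insert_pivot[OF U 2 span_bs] by simp
    moreover have "set (w # bs) \<subseteq> vecs (Suc n)"
      using bs(1) 2 subspace_in_vecs[OF U] vecs_mono_Suc by auto
    ultimately show ?thesis unfolding is_basis_list_def by blast
  qed
qed

lemma col_indep_iff_supp_indep:
  assumes bs: "set bs \<subseteq> vecs n"
  shows "col_indep n bs I \<longleftrightarrow> supp_indep n (perp n (spanv n (set bs))) I"
proof
  assume ci: "col_indep n bs I"
  have I: "I \<subseteq> {0..<n}" using ci unfolding col_indep_def by simp
  show "supp_indep n (perp n (spanv n (set bs))) I" unfolding supp_indep_def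
  proof (intro conjI I ballI impI)
    fix x assume x: "x \<in> perp n (spanv n (set bs))" and supp: "\<forall>i. i \<notin> I \<longrightarrow> x i = 0"
    have "(\<Sum>i\<in>I. x i * (bs ! j) i) = 0" if j: "j < length bs" for j
    proof -
      have "dotp n x (bs ! j) = 0"
        using x spanv_superset nth_mem[OF j] unfolding perp_def by blast
      moreover have "dotp n x (bs ! j) = (\<Sum>i\<in>I. x i * (bs ! j) i)"
        unfolding dotp_def using I supp by (intro sum.mono_neutral_right) auto
      ultimately show ?thesis by simp
    qed
    then have "\<forall>i\<in>I. x i = 0" using ci unfolding col_indep_def by blast
    then show "x = (\<lambda>_. 0)" using supp by auto
  qed
next
  assume si: "supp_indep n (perp n (spanv n (set bs))) I"
  have I: "I \<subseteq> {0..<n}" using si unfolding supp_indep_def by simp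
  show "col_indep n bs I" unfolding col_indep_def
  proof (intro conjI I allI impI ballI)
    fix c :: "nat \<Rightarrow> 'a" and i
    assume rows: "\<forall>j<length bs. (\<Sum>i\<in>I. c i * (bs ! j) i) = 0" and i: "i \<in> I"
    define x where "x = (\<lambda>i. if i \<in> I then c i else 0)"
    have dotp_x: "dotp n x u = (\<Sum>i\<in>I. c i * u i)" for u
      unfolding dotp_def x_def using I by (intro sum.mono_neutral_cong_right) auto
    let ?V = "{u \<in> vecs n. dotp n x u = 0}"
    have "is_subspace n ?V" by (rule subspace_dotp_kernel)
    moreover have "set bs \<subseteq> ?V" using rows bs by (auto simp: in_set_conv_nth dotp_x)
    ultimately have "spanv n (set bs) \<subseteq> ?V" by (rule spanv_least)
    moreover have "x \<in> vecs n" using I unfolding x_def vecs_def by auto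
    ultimately have "x \<in> perp n (spanv n (set bs))" unfolding perp_def by auto
    then have "x = (\<lambda>_. 0)" using si unfolding supp_indep_def x_def by auto
    then show "c i = 0" using i fun_cong[of x "\<lambda>_. 0" i] unfolding x_def by simp
  qed
qed

lemma matroid_of_eq_supp_indep:
  assumes "is_subspace n U"
  shows "matroid_of n U = supp_indep n (perp n U)"
proof -
  define bs where "bs = (SOME bs. is_basis_list n U bs)"
  have "is_basis_list n U bs"
    unfolding bs_def using basis_list_exists[OF assms] by (rule someI_ex)
  then show ?thesis
    unfolding matroid_of_def bs_def[symmetric] is_basis_list_def
    using col_indep_iff_supp_indep by blast
qed

section \<open>Duality\<close>

lemma supp_indep_subset: "supp_indep n C X \<Longrightarrow> Y \<subseteq> X \<Longrightarrow> supp_indep n C Y"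
  unfolding supp_indep_def by blast

lemma fundamental_circuit_vector:
  assumes C: "is_subspace n C" and B: "supp_indep n C B" and j: "j < n"
    and dep: "\<not> supp_indep n C (insert j B)"
  obtains x where "x \<in> C" "\<forall>i. i \<notin> insert j B \<longrightarrow> x i = 0" "x j = 1"
proof -
  have "insert j B \<subseteq> {0..<n}" using B j unfolding supp_indep_def by auto
  then obtain x where x: "x \<in> C" "\<forall>i. i \<notin> insert j B \<longrightarrow> x i = 0" "x \<noteq> (\<lambda>_. 0)"
    using dep unfolding supp_indep_def by blast
  have "x j \<noteq> 0"
  proof
    assume "x j = 0"
    then have "\<forall>i. i \<notin> B \<longrightarrow> x i = 0" using x(2) by auto
    then show False using B x(1,3) unfolding supp_indep_def by blast
  qed
  then show ?thesis
    using that[of "\<lambda>i. inverse (x j) * x i"] subspace_scale[OF C x(1)] x(2) by simp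
qed

lemma perp_vanishes_on_closure:
  assumes C: "is_subspace n C" and B: "supp_indep n C B" and j: "j < n"
    and dep: "\<not> supp_indep n C (insert j B)"
    and y: "y \<in> perp n C" "\<forall>b\<in>B. y b = 0"
  shows "y j = 0"
proof -
  obtain x where x: "x \<in> C" "\<forall>i. i \<notin> insert j B \<longrightarrow> x i = 0" "x j = 1"
    using fundamental_circuit_vector[OF C B j dep] by blast
  have "dotp n y x = y j * x j"
  proof (rule dotp_eq_single_term[OF j])
    fix l assume "l < n" "l \<noteq> j"
    then show "y l * x l = 0" using y(2) x(2) by (cases "l \<in> B") auto
  qed
  moreover have "dotp n y x = 0" using y(1) x(1) unfolding perp_def by auto
  ultimately show ?thesis using x(3) by simp
qed

lemma subspace_agree_on:
  assumes P: "is_subspace n P"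
  shows "is_subspace n {w \<in> vecs n. \<exists>y\<in>P. \<forall>j\<in>J. y j = w j}" (is "is_subspace n ?V")
  unfolding is_subspace_def
proof (intro conjI ballI allI)
  show "?V \<subseteq> vecs n" by blast
  show "(\<lambda>_. 0) \<in> ?V" unfolding vecs_def using subspace_zero[OF P] by force
next
  fix x y assume "x \<in> ?V" "y \<in> ?V"
  then obtain x' y' where "x \<in> vecs n" "y \<in> vecs n" "x' \<in> P" "y' \<in> P"
    "\<forall>j\<in>J. x' j = x j" "\<forall>j\<in>J. y' j = y j" by blast
  then show "(\<lambda>i. x i + y i) \<in> ?V" unfolding vecs_def
    by (intro CollectI conjI bexI[of _ "\<lambda>i. x' i + y' i"] subspace_add[OF P]) auto
next
  fix c x assume "x \<in> ?V"
  then obtain x' where "x \<in> vecs n" "x' \<in> P" "\<forall>j\<in>J. x' j = x j" by blast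
  then show "(\<lambda>i. c * x i) \<in> ?V" unfolding vecs_def
    by (intro CollectI conjI bexI[of _ "\<lambda>i. c * x' i"] subspace_scale[OF P]) auto
qed

text \<open>The orthogonal complement of \<open>C\<close> restricted to a \<open>C\<close>-independent set \<open>J\<close> is onto:
  the vectors agreeing on \<open>J\<close> with one of \<open>C\<^sup>\<bottom>\<close> form a subspace whose complement lies in
  \<open>C\<close> and is supported on \<open>J\<close>, hence is trivial.\<close>

lemma perp_interpolates_on_indep:
  assumes C: "is_subspace n C" and J: "supp_indep n C J" and t: "t \<in> vecs n"
  obtains y where "y \<in> perp n C" "\<forall>j\<in>J. y j = t j"
proof -
  define V where "V = {w \<in> vecs n. \<exists>y\<in>perp n C. \<forall>j\<in>J. y j = w j}"
  have P: "is_subspace n (perp n C)" by (rule subspace_perp)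
  have "is_subspace n V" unfolding V_def by (rule subspace_agree_on[OF P])
  moreover have "perp n V \<subseteq> {(\<lambda>_. 0)}"
  proof
    fix z assume z: "z \<in> perp n V"
    have "z k = 0" if "k \<notin> J" for k
    proof (cases "k < n")
      case True
      then have "unit_vec k \<in> V"
        using that unit_vec_in_vecs subspace_zero[OF P] unfolding V_def by (force simp: unit_vec_def)
      then have "dotp n z (unit_vec k) = 0" using z unfolding perp_def by blast
      then have "dotp n (unit_vec k) z = 0" by (simp add: dotp_commute)
      then show ?thesis using True by (simp add: dotp_unit_vec)
    next
      case False
      then show ?thesis using z unfolding perp_def vecs_def by auto
    qed
    moreover have "z \<in> C"
    proof -
      have "perp n C \<subseteq> V" unfolding V_def perp_def by auto
      then show ?thesis using z perp_antimono perp_perp[OF C] by blast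
    qed
    ultimately show "z \<in> {(\<lambda>_. 0)}" using J unfolding supp_indep_def by auto
  qed
  ultimately have "t \<in> V" using subspace_eq_vecs_if_perp_trivial t by blast
  then show ?thesis using that unfolding V_def by blast
qed

lemma perp_supp_indep_if_disjoint_basis:
  assumes C: "is_subspace n C" and B: "matroid_basis {0..<n} (supp_indep n C) B"
    and I: "I \<subseteq> {0..<n}" "I \<inter> B = {}"
  shows "supp_indep n (perp n C) I"
  unfolding supp_indep_def
proof (intro conjI I(1) ballI impI)
  have B_sub: "B \<subseteq> {0..<n}" and B_indep: "supp_indep n C B"
    and B_max: "\<And>X. X \<subseteq> {0..<n} \<Longrightarrow> supp_indep n C X \<Longrightarrow> B \<subseteq> X \<Longrightarrow> X = B"
    using B unfolding matroid_basis_def by blast+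
  fix y assume y: "y \<in> perp n C" and supp: "\<forall>i. i \<notin> I \<longrightarrow> y i = 0"
  have "y i = 0" if i: "i \<in> I" for i
  proof (rule perp_vanishes_on_closure[OF C B_indep _ _ y])
    show "i < n" using i I(1) by auto
    show "\<not> supp_indep n C (insert i B)"
    proof
      assume "supp_indep n C (insert i B)"
      with B_sub \<open>i < n\<close> have "insert i B = B" by (intro B_max) auto
      then show False using i I(2) by blast
    qed
    show "\<forall>b\<in>B. y b = 0" using supp I(2) by blast
  qed
  then show "y = (\<lambda>_. 0)" using supp by auto
qed

lemma dependent_insert_of_maximal_outside:
  assumes C: "is_subspace n C" and I: "supp_indep n (perp n C) I" and B: "supp_indep n C B"
    and B_max: "\<And>j. j < n \<Longrightarrow> j \<notin> I \<Longrightarrow> j \<notin> B \<Longrightarrow> \<not> supp_indep n C (insert j B)"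
    and k: "k \<in> I" "k \<notin> B"
  shows "\<not> supp_indep n C (insert k B)"
proof
  assume k_indep: "supp_indep n C (insert k B)"
  have "k < n" using I k(1) unfolding supp_indep_def by auto
  then obtain y where y: "y \<in> perp n C" "\<forall>j\<in>insert k B. y j = unit_vec k j"
    using perp_interpolates_on_indep[OF C k_indep unit_vec_in_vecs] by blast
  have y_B: "\<forall>b\<in>B. y b = 0" using y(2) k(2) by (auto simp: unit_vec_def)
  have "y j = 0" if "j \<notin> I" for j
  proof (cases "j < n \<and> j \<notin> B")
    case True
    with that show ?thesis by (intro perp_vanishes_on_closure[OF C B _ _ y(1) y_B] B_max) simp_all
  next
    case False
    then show ?thesis using y(1) y_B unfolding perp_def vecs_def by auto
  qed
  then have "y = (\<lambda>_. 0)" using I y(1) unfolding supp_indep_def by blast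
  moreover have "y k = 1" using y(2) by (simp add: unit_vec_def)
  ultimately show False by simp
qed

lemma disjoint_basis_if_perp_supp_indep:
  assumes C: "is_subspace n C" and I: "supp_indep n (perp n C) I"
  obtains B where "matroid_basis {0..<n} (supp_indep n C) B" "I \<inter> B = {}"
proof -
  define F where "F = {X. X \<subseteq> {0..<n} - I \<and> supp_indep n C X}"
  have "finite F" unfolding F_def by (rule finite_subset[of _ "Pow ({0..<n} - I)"]) auto
  moreover have "{} \<in> F" unfolding F_def supp_indep_def by (simp add: fun_eq_iff)
  ultimately obtain B where "B \<in> F" and B_max: "\<forall>X\<in>F. B \<subseteq> X \<longrightarrow> X = B"
    using finite_has_maximal[of F] by blast
  then have B: "B \<subseteq> {0..<n} - I" "supp_indep n C B" unfolding F_def by auto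
  have dep_outside: "\<not> supp_indep n C (insert j B)" if "j < n" "j \<notin> I" "j \<notin> B" for j
  proof
    assume "supp_indep n C (insert j B)"
    then have "insert j B \<in> F" using B(1) that(1,2) unfolding F_def by simp
    then have "insert j B = B" using B_max by blast
    then show False using that(3) by blast
  qed
  have "X = B" if X: "X \<subseteq> {0..<n}" "supp_indep n C X" "B \<subseteq> X" for X
  proof (rule ccontr)
    assume "X \<noteq> B"
    then obtain k where k: "k \<in> X" "k \<notin> B" using X by auto
    have "supp_indep n C (insert k B)"
      using supp_indep_subset[OF X(2)] k X(3) by blast
    moreover have "k < n" using k X(1) by auto
    ultimately show False
      using dep_outside dependent_insert_of_maximal_outside[OF C I B(2) dep_outside] k(2) by blast
  qed
  then have "matroid_basis {0..<n} (supp_indep n C) B"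
    using B unfolding matroid_basis_def by blast
  moreover have "I \<inter> B = {}" using B(1) by auto
  ultimately show ?thesis by (rule that)
qed

lemma dual_supp_indep:
  assumes "is_subspace n C"
  shows "dual_matroid {0..<n} (supp_indep n C) = supp_indep n (perp n C)"
proof (intro ext iffI)
  fix I assume "dual_matroid {0..<n} (supp_indep n C) I"
  then obtain B where "I \<subseteq> {0..<n}" "matroid_basis {0..<n} (supp_indep n C) B" "I \<inter> B = {}"
    unfolding dual_matroid_def by blast
  then show "supp_indep n (perp n C) I"
    using perp_supp_indep_if_disjoint_basis[OF assms] by blast
next
  fix I assume I: "supp_indep n (perp n C) I"
  obtain B where "matroid_basis {0..<n} (supp_indep n C) B" "I \<inter> B = {}"
    by (rule disjoint_basis_if_perp_supp_indep[OF assms I])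
  moreover have "I \<subseteq> {0..<n}" using I unfolding supp_indep_def by blast
  ultimately show "dual_matroid {0..<n} (supp_indep n C) I"
    unfolding dual_matroid_def by blast
qed

theorem theorem12:
  fixes W :: "(nat \<Rightarrow> 'a::field) set" and v :: "nat \<Rightarrow> 'a" and n :: nat
  assumes "is_subspace n W" and "v \<in> vecs n"
  shows "dual_matroid {0..<n} (contract_bullet n W v) = delete_bullet n (perp n W) v"
proof -
  define A where "A = W \<inter> perp n (spanv n {v})"
  have perp_v: "perp n (spanv n {v}) = perp n {v}"
    using assms(2) by (intro perp_spanv) auto
  have A: "is_subspace n A"
    unfolding A_def perp_v using assms(1) subspace_perp[of n "{v}"]
    unfolding is_subspace_def by auto
  have gen: "perp n W \<union> {v} \<subseteq> vecs n"
    using assms(2) unfolding perp_def by auto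
  have perp_A: "perp n A = spanv n (perp n W \<union> {v})"
  proof -
    have "perp n (spanv n (perp n W \<union> {v})) = A"
      unfolding A_def perp_spanv[OF gen] perp_Un perp_v perp_perp[OF assms(1)] ..
    then show ?thesis using perp_perp[OF subspace_spanv[OF gen]] by simp
  qed
  have "dual_matroid {0..<n} (contract_bullet n W v) = supp_indep n (perp n (perp n A))"
    unfolding contract_bullet_def A_def[symmetric] matroid_of_eq_supp_indep[OF A]
    by (rule dual_supp_indep[OF subspace_perp])
  also have "\<dots> = delete_bullet n (perp n W) v"
    unfolding delete_bullet_def perp_A[symmetric] matroid_of_eq_supp_indep[OF subspace_perp] ..
  finally show ?thesis .
qed

end
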